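(* Let $2\le k<n$ and let $A$ be an antipodal $k$-splitting of $Q_2^n$. Then $|u_1\cap u_2|\ge 2$ for all $u_1,u_2\in\beta(A)$.
   Context: $Q_2^n=\{0,1\}^n$. For $0\le m\le n$, an $m$-face of $Q_2^n$ is given by a tuple $a=(a_1,\dots,a_n)\in\{0,1,*\}^n$ with exactly $m$ entries equal to $*$; it denotes the set $\{x\in Q_2^n : x_i=a_i \text{ whenever } a_i\in\{0,1\}\}$. The direction of a face is the set of positions of its asterisks; two faces are parallel if they have the same direction, and two parallel faces $a,b$ are antipodal if $b_i=1-a_i$ at every non-asterisk position $i$. An antipodal $k$-splitting of $Q_2^n$ is a collection of exactly $2^k$ $(n-k)$-faces whose union is $Q_2^n$ and which contains no pair of parallel non-antipodal faces. For a face $a$, $\beta(a)=\{i: a_i\in\{0,1\}\}$, and $\beta(A)=\{\beta(a): a\in A\}$. *)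

theory Defs
  imports Main
begin

text \<open>A vertex of Q_2^n is a bool list of length n (positions 0..n-1).
  A face is a list over {0,1,*}, encoded as bool option list, None = *.\<close>

definition cube :: "nat \<Rightarrow> bool list set" where
  "cube n = {x. length x = n}"

definition face_dir :: "bool option list \<Rightarrow> nat set" where
  "face_dir a = {i. i < length a \<and> a ! i = None}"

definition is_face :: "nat \<Rightarrow> nat \<Rightarrow> bool option list \<Rightarrow> bool" where
  "is_face n m a \<longleftrightarrow> length a = n \<and> card (face_dir a) = m"

definition face_set :: "bool option list \<Rightarrow> bool list set" where
  "face_set a = {x. length x = length a \<and>
      (\<forall>i < length a. \<forall>c. a ! i = Some c \<longrightarrow> x ! i = c)}"

definition parallel :: "bool option list \<Rightarrow> bool option list \<Rightarrow> bool" where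
  "parallel a b \<longleftrightarrow> length a = length b \<and> face_dir a = face_dir b"

definition antipodal :: "bool option list \<Rightarrow> bool option list \<Rightarrow> bool" where
  "antipodal a b \<longleftrightarrow> parallel a b \<and>
      (\<forall>i < length a. \<forall>c. a ! i = Some c \<longrightarrow> b ! i = Some (\<not> c))"

definition antipodal_splitting :: "nat \<Rightarrow> nat \<Rightarrow> bool option list set \<Rightarrow> bool" where
  "antipodal_splitting n k A \<longleftrightarrow>
     finite A \<and> card A = 2 ^ k \<and>
     (\<forall>a\<in>A. is_face n (n - k) a) \<and>
     (\<Union>a\<in>A. face_set a) = cube n \<and>
     (\<forall>a\<in>A. \<forall>b\<in>A. a \<noteq> b \<and> parallel a b \<longrightarrow> antipodal a b)"

definition beta :: "bool option list \<Rightarrow> nat set" where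
  "beta a = {i. i < length a \<and> a ! i \<noteq> None}"

end

theory Submission
  imports Defs
begin

text \<open>Counting shows that the faces of an antipodal splitting are pairwise disjoint, and two
  faces are disjoint iff they take opposite values at some position fixed in both. Every face
  \<open>a\<close> has a parallel partner: otherwise, for \<open>S = \<beta>(a)\<close>, the signed count
  \<open>\<Sum>x. (-1)^|{j \<in> S. x\<^sub>j}|\<close> vanishes on the whole cube and on every other face (each has a free
  coordinate in \<open>S\<close>), but not on \<open>a\<close>, where it is constant. Now if \<open>\<beta>(a) \<noteq> \<beta>(b)\<close> met only in
  \<open>i\<close>, then \<open>a\<close> and \<open>b\<close> would disagree at \<open>i\<close>, so the antipode of \<open>a\<close> would agree with \<open>b\<close> at
  \<open>i\<close>, their only common fixed position, and hence meet \<open>b\<close>.\<close>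

lemma disjoint_if_card_UN_eq_sum:
  assumes "finite I" and "\<And>i. i \<in> I \<Longrightarrow> finite (F i)"
    and "card (\<Union>i\<in>I. F i) = (\<Sum>i\<in>I. card (F i))"
    and "i \<in> I" and "j \<in> I" and "i \<noteq> j"
  shows "F i \<inter> F j = {}"
proof -
  let ?R = "I - {i, j}"
  have "(\<Union>i\<in>I. F i) = (F i \<union> F j) \<union> (\<Union>i\<in>?R. F i)"
    using assms(4,5) by blast
  then have "card (\<Union>i\<in>I. F i) \<le> card (F i \<union> F j) + (\<Sum>i\<in>?R. card (F i))"
    using card_Un_le[of "F i \<union> F j" "\<Union>i\<in>?R. F i"] card_UN_le[of ?R F] assms(1) by simp
  moreover have "(\<Sum>i\<in>I. card (F i)) = card (F i) + card (F j) + (\<Sum>i\<in>?R. card (F i))"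
    using assms(1,4-6) sum.remove[of I i "\<lambda>i. card (F i)"]
      sum.remove[of "I - {i}" j "\<lambda>i. card (F i)"]
    by (simp add: Diff_insert2[symmetric] insert_commute)
  moreover have "card (F i \<union> F j) + card (F i \<inter> F j) = card (F i) + card (F j)"
    using card_Un_Int[of "F i" "F j"] assms(2,4,5) by simp
  ultimately have "card (F i \<inter> F j) = 0"
    using assms(3) by linarith
  then show ?thesis
    using assms(2,4) by simp
qed

lemma face_set_Cons_None: "face_set (None # a) = (\<lambda>(y, x). y # x) ` (UNIV \<times> face_set a)"
proof (rule set_eqI)
  fix z show "z \<in> face_set (None # a) \<longleftrightarrow> z \<in> (\<lambda>(y, x). y # x) ` (UNIV \<times> face_set a)"
    by (cases z) (auto simp: face_set_def All_less_Suc2)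
qed

lemma face_set_Cons_Some: "face_set (Some c # a) = (#) c ` face_set a"
proof (rule set_eqI)
  fix z show "z \<in> face_set (Some c # a) \<longleftrightarrow> z \<in> (#) c ` face_set a"
    by (cases z) (auto simp: face_set_def All_less_Suc2)
qed

lemma face_dir_Cons:
  "face_dir (p # a) = (if p = None then insert 0 (Suc ` face_dir a) else Suc ` face_dir a)"
proof (rule set_eqI)
  fix i show "i \<in> face_dir (p # a) \<longleftrightarrow>
      i \<in> (if p = None then insert 0 (Suc ` face_dir a) else Suc ` face_dir a)"
    by (cases i) (auto simp: face_dir_def)
qed

lemma finite_face_dir: "finite (face_dir a)"
  by (simp add: face_dir_def)

lemma finite_face_set: "finite (face_set a)"
proof (rule finite_subset)
  show "face_set a \<subseteq> {xs. set xs \<subseteq> UNIV \<and> length xs = length a}"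
    by (auto simp: face_set_def)
qed (rule finite_lists_length_eq, simp)

lemma card_face_set: "card (face_set a) = 2 ^ card (face_dir a)"
proof (induction a)
  case Nil
  have "face_set [] = {[]}" by (auto simp: face_set_def)
  then show ?case by (simp add: face_dir_def)
next
  case (Cons p a)
  show ?case
  proof (cases p)
    case None
    have "card (face_set (p # a)) = card ((UNIV :: bool set) \<times> face_set a)"
      unfolding None face_set_Cons_None by (intro card_image) (auto simp: inj_on_def)
    then show ?thesis
      using Cons None by (simp add: card_cartesian_product face_dir_Cons card_image finite_face_dir)
  next
    case (Some c)
    have "card (face_set (p # a)) = card (face_set a)"
      unfolding Some face_set_Cons_Some by (rule card_image) (auto simp: inj_on_def)
    then show ?thesis
      using Cons Some by (simp add: face_dir_Cons card_image)
  qed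
qed

lemma face_set_nonempty: "face_set a \<noteq> {}"
  using card_face_set[of a] by auto

lemma cube_eq_face_set: "cube n = face_set (replicate n None)"
  by (auto simp: cube_def face_set_def)

lemma card_cube: "card (cube n) = 2 ^ n"
proof -
  have "face_dir (replicate n None) = {..<n}"
    by (auto simp: face_dir_def)
  then show ?thesis
    by (simp add: cube_eq_face_set card_face_set)
qed

lemma beta_subset: "beta a \<subseteq> {..<length a}"
  by (auto simp: beta_def)

lemma finite_beta: "finite (beta a)"
  using beta_subset finite_subset by blast

lemma face_dir_eq_Diff_beta: "face_dir a = {..<length a} - beta a"
  by (auto simp: beta_def face_dir_def)

lemma card_beta: "card (beta a) = length a - card (face_dir a)"
proof -
  have "beta a = {..<length a} - face_dir a"
    by (auto simp: beta_def face_dir_def)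
  then show ?thesis
    by (simp add: card_Diff_subset finite_face_dir face_dir_def subset_eq)
qed

lemma face_sets_disjoint_iff:
  assumes "length a = length b"
  shows "face_set a \<inter> face_set b = {} \<longleftrightarrow>
    (\<exists>i < length a. \<exists>c. a ! i = Some c \<and> b ! i = Some (\<not> c))"
proof
  assume "face_set a \<inter> face_set b = {}"
  define x where "x = map (\<lambda>i. case a ! i of Some c \<Rightarrow> c | None \<Rightarrow> b ! i = Some True)
    [0..<length a]"
  have "x \<in> face_set a" by (auto simp: x_def face_set_def)
  then have "x \<notin> face_set b"
    using \<open>face_set a \<inter> face_set b = {}\<close> by blast
  then show "\<exists>i < length a. \<exists>c. a ! i = Some c \<and> b ! i = Some (\<not> c)"
    using assms by (force simp: x_def face_set_def split: option.splits)
next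
  assume "\<exists>i < length a. \<exists>c. a ! i = Some c \<and> b ! i = Some (\<not> c)"
  then show "face_set a \<inter> face_set b = {}"
    using assms by (force simp: face_set_def)
qed

lemma antipodal_splitting_face:
  assumes "antipodal_splitting n k A" and "a \<in> A"
  shows "length a = n" and "card (face_dir a) = n - k"
  using assms by (auto simp: antipodal_splitting_def is_face_def)

lemma antipodal_splitting_card_beta:
  assumes "antipodal_splitting n k A" and "k \<le> n" and "a \<in> A"
  shows "card (beta a) = k"
  using antipodal_splitting_face[OF assms(1,3)] assms(2) by (simp add: card_beta)

lemma antipodal_splitting_disjoint:
  assumes sp: "antipodal_splitting n k A" and "k \<le> n"
    and "a \<in> A" and "b \<in> A" and "a \<noteq> b"
  shows "face_set a \<inter> face_set b = {}"
proof (rule disjoint_if_card_UN_eq_sum[of A face_set])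
  have "(\<Sum>c\<in>A. card (face_set c)) = card A * 2 ^ (n - k)"
    using antipodal_splitting_face[OF sp] by (simp add: card_face_set)
  also have "\<dots> = 2 ^ n"
    using sp \<open>k \<le> n\<close> by (simp add: antipodal_splitting_def power_add[symmetric])
  finally show "card (\<Union>c\<in>A. face_set c) = (\<Sum>c\<in>A. card (face_set c))"
    using sp by (simp add: antipodal_splitting_def card_cube)
qed (use assms finite_face_set in \<open>auto simp: antipodal_splitting_def\<close>)

definition parity_sign :: "nat set \<Rightarrow> bool list \<Rightarrow> int" where
  "parity_sign S x = (-1) ^ card {j \<in> S. x ! j}"

lemma parity_sign_flip:
  assumes "finite S" and "j \<in> S" and "j < length x"
  shows "parity_sign S (x[j := \<not> x ! j]) = - parity_sign S x"
proof -
  let ?T = "{i \<in> S - {j}. x ! i}"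
  have T: "finite ?T" "j \<notin> ?T"
    using assms(1) by auto
  have "{i \<in> S. x ! i} = (if x ! j then insert j ?T else ?T)"
    and "{i \<in> S. x[j := \<not> x ! j] ! i} = (if x ! j then ?T else insert j ?T)"
    using assms by (auto simp: nth_list_update)
  then show ?thesis
    using T by (simp add: parity_sign_def)
qed

lemma flip_mem_face_set:
  assumes "x \<in> face_set f" and "j < length f" and "f ! j = None"
  shows "x[j := \<not> x ! j] \<in> face_set f"
  using assms by (auto simp: face_set_def nth_list_update)

lemma sum_parity_sign_eq_0:
  assumes "finite S" and "j \<in> S" and "j < length f" and "f ! j = None"
  shows "(\<Sum>x\<in>face_set f. parity_sign S x) = 0"
proof -
  let ?flip = "\<lambda>x. x[j := \<not> x ! j]"
  have len: "length x = length f" if "x \<in> face_set f" for x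
    using that by (simp add: face_set_def)
  have "(\<Sum>x\<in>face_set f. parity_sign S x) = (\<Sum>x\<in>face_set f. parity_sign S (?flip x))"
    by (rule sum.reindex_bij_witness[where i = ?flip and j = ?flip])
      (use assms len flip_mem_face_set in simp_all)
  also have "\<dots> = - (\<Sum>x\<in>face_set f. parity_sign S x)"
    using assms len parity_sign_flip by (simp add: sum_negf)
  finally show ?thesis
    by simp
qed

lemma sum_parity_sign_neq_0:
  assumes "S \<subseteq> beta f"
  shows "(\<Sum>x\<in>face_set f. parity_sign S x) \<noteq> 0"
proof -
  obtain y where y: "y \<in> face_set f"
    using face_set_nonempty by blast
  have "parity_sign S x = parity_sign S y" if "x \<in> face_set f" for x
  proof -
    have "x ! j = y ! j" if "j \<in> S" for j
      using assms that \<open>x \<in> face_set f\<close> y by (auto simp: beta_def face_set_def)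
    then have "{j \<in> S. x ! j} = {j \<in> S. y ! j}"
      by blast
    then show ?thesis
      by (simp add: parity_sign_def)
  qed
  then have "(\<Sum>x\<in>face_set f. parity_sign S x) = int (card (face_set f)) * parity_sign S y"
    by simp
  then show ?thesis
    using finite_face_set face_set_nonempty by (simp add: parity_sign_def)
qed

lemma antipodal_splitting_has_parallel:
  assumes sp: "antipodal_splitting n k A" and "1 \<le> k" and "k \<le> n" and a: "a \<in> A"
  shows "\<exists>e\<in>A. e \<noteq> a \<and> beta e = beta a"
proof (rule ccontr)
  assume unique: "\<not> ?thesis"
  define S where "S = beta a"
  let ?\<sigma> = "\<lambda>X. \<Sum>x\<in>X. parity_sign S x"
  have S: "finite S" "card S = k" "S \<subseteq> {..<n}"
    using antipodal_splitting_card_beta[OF sp \<open>k \<le> n\<close> a] antipodal_splitting_face[OF sp a]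
      beta_subset[of a] by (auto simp: S_def finite_beta)
  then obtain j where "j \<in> S"
    using \<open>1 \<le> k\<close> by fastforce
  have "?\<sigma> (cube n) = 0"
    unfolding cube_eq_face_set using S \<open>j \<in> S\<close> by (intro sum_parity_sign_eq_0) auto
  moreover have "?\<sigma> (face_set c) = 0" if c: "c \<in> A - {a}" for c
  proof -
    have "card (beta c) = card S" and "beta c \<noteq> S"
      using c unique antipodal_splitting_card_beta[OF sp \<open>k \<le> n\<close>] S by (auto simp: S_def)
    then have "\<not> S \<subseteq> beta c"
      using card_subset_eq[OF finite_beta] by metis
    then obtain i where "i \<in> S" "i \<notin> beta c"
      by blast
    moreover have "length c = n"
      using c antipodal_splitting_face[OF sp] by simp
    ultimately show ?thesis
      using S by (intro sum_parity_sign_eq_0[of S i]) (auto simp: beta_def)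
  qed
  moreover have "?\<sigma> (cube n) = (\<Sum>c\<in>A. ?\<sigma> (face_set c))"
    using sp antipodal_splitting_disjoint[OF sp \<open>k \<le> n\<close>] finite_face_set
      sum.UNION_disjoint[of A face_set "parity_sign S"]
    by (simp add: antipodal_splitting_def)
  ultimately have "?\<sigma> (face_set a) = 0"
    using sp a by (simp add: antipodal_splitting_def sum.remove)
  then show False
    using sum_parity_sign_neq_0[of S a] by (simp add: S_def)
qed

lemma antipodal_splitting_card_beta_Int:
  assumes sp: "antipodal_splitting n k A" and "1 \<le> k" and "k \<le> n"
    and a: "a \<in> A" and b: "b \<in> A" and "beta a \<noteq> beta b"
  shows "card (beta a \<inter> beta b) \<ge> 2"
proof (rule ccontr)
  assume "\<not> ?thesis"
  have len: "length c = n" if "c \<in> A" for c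
    using antipodal_splitting_face[OF sp that] by simp
  have "face_set a \<inter> face_set b = {}"
    using antipodal_splitting_disjoint[OF sp \<open>k \<le> n\<close> a b] \<open>beta a \<noteq> beta b\<close> by blast
  then obtain i c where i: "i < n" "a ! i = Some c" "b ! i = Some (\<not> c)"
    using face_sets_disjoint_iff len a b by metis
  then have "i \<in> beta a \<inter> beta b"
    using len a b by (simp add: beta_def)
  with \<open>\<not> ?thesis\<close> have single: "beta a \<inter> beta b = {i}"
    using finite_beta card_le_Suc0_iff_eq[of "beta a \<inter> beta b"] by auto
  obtain e where e: "e \<in> A" "e \<noteq> a" "beta e = beta a"
    using antipodal_splitting_has_parallel[OF sp \<open>1 \<le> k\<close> \<open>k \<le> n\<close> a] by blast
  have "parallel a e"
    using e len a by (simp add: parallel_def face_dir_eq_Diff_beta)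
  then have "antipodal a e"
    using sp a e by (auto simp: antipodal_splitting_def)
  then have "e ! i = Some (\<not> c)"
    using i len a by (simp add: antipodal_def)
  have "face_set e \<inter> face_set b \<noteq> {}"
  proof
    assume "face_set e \<inter> face_set b = {}"
    then obtain j d where j: "j < n" "e ! j = Some d" "b ! j = Some (\<not> d)"
      using face_sets_disjoint_iff len e b by metis
    then have "j \<in> beta a \<inter> beta b"
      using e len b by (auto simp: beta_def)
    then show False
      using single j i \<open>e ! i = Some (\<not> c)\<close> by auto
  qed
  moreover have "e \<noteq> b"
    using e \<open>beta a \<noteq> beta b\<close> by blast
  ultimately show False
    using antipodal_splitting_disjoint[OF sp \<open>k \<le> n\<close> e(1) b] by blast
qed

theorem proposition18:
  fixes n k :: nat and A :: "bool option list set"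
  assumes "2 \<le> k" and "k < n" and "antipodal_splitting n k A"
  shows "\<forall>u1 \<in> beta ` A. \<forall>u2 \<in> beta ` A. card (u1 \<inter> u2) \<ge> 2"
proof (intro ballI)
  fix u1 u2
  assume "u1 \<in> beta ` A" and "u2 \<in> beta ` A"
  then obtain a b where "a \<in> A" "b \<in> A" "u1 = beta a" "u2 = beta b"
    by blast
  then show "card (u1 \<inter> u2) \<ge> 2"
    using assms antipodal_splitting_card_beta[OF assms(3)]
      antipodal_splitting_card_beta_Int[OF assms(3)]
    by (cases "beta a = beta b") auto
qed

end
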